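(* Let $n\ge2$, $0<\alpha_1\le\dots\le\alpha_m$ with $\sum\alpha_j=1$, $(A,\tau)=(\mathbb{C}p_1\oplus\cdots\oplus\mathbb{C}p_m,\tau_1)*(\mathbb{M}_n,tr_n)$ the reduced free product with $\tau_1(p_j)=\alpha_j$, $\{e_{ij}\}$ matrix units of $\mathbb{M}_n$, $u=\sum_{i=1}^{n-1}e_{i,i+1}+e_{n,1}$, $B=C^*(\{u^kp_ju^{-k}:0\le k\le n-1,1\le j\le m\}\cup\{e_{11},\dots,e_{nn}\})$, and for an integer $l$ with $l\mid n$, $1<l<n$, $E=C^*(\{u^kp_ju^{-k}:0\le k\le l-1,1\le j\le m\}\cup\{e_{11},\dots,e_{nn}\}\cup\{u^l,u^{2l},\dots,u^{n-l}\})$. Then (1) for $b\in B$ and $0<k\le n-1$, $\tau(bu^k)=0$ and $\tau(u^kb)=0$; (2) for $e\in E$ and $0<k\le l-1$, $\tau(eu^k)=0$ and $\tau(u^ke)=0$.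
   Context: Reduced free product: the unique unital $C^*$-algebra with state generated by unital copies of the factors, restricting to the given traces, in which they are free, with faithful GNS representation; $\tau$ is a faithful trace. $tr_n$ is the normalized trace on $\mathbb{M}_n$. *)

theory Defs
  imports "HOL-Analysis.Analysis"
begin

text \<open>A unital C*-algebra structure on a real Banach algebra with unit:
  sc is complex scalar multiplication (extending the real one), st is the involution.\<close>
definition cstar_algebra ::
  "(complex \<Rightarrow> 'a::{banach,real_normed_algebra_1} \<Rightarrow> 'a) \<Rightarrow> ('a \<Rightarrow> 'a) \<Rightarrow> bool" where
  "cstar_algebra sc st \<longleftrightarrow>
     (\<forall>r x. sc (complex_of_real r) x = scaleR r x) \<and>
     (\<forall>a b x. sc (a + b) x = sc a x + sc b x) \<and>
     (\<forall>a x y. sc a (x + y) = sc a x + sc a y) \<and>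
     (\<forall>a b x. sc (a * b) x = sc a (sc b x)) \<and>
     (\<forall>a x. norm (sc a x) = cmod a * norm x) \<and>
     (\<forall>a x y. sc a (x * y) = sc a x * y \<and> sc a (x * y) = x * sc a y) \<and>
     (\<forall>x y. st (x + y) = st x + st y) \<and>
     (\<forall>a x. st (sc a x) = sc (cnj a) (st x)) \<and>
     (\<forall>x y. st (x * y) = st y * st x) \<and>
     (\<forall>x. st (st x) = x) \<and>
     (\<forall>x. norm (st x * x) = norm x ^ 2)"

definition faithful_tracial_state ::
  "(complex \<Rightarrow> 'a::{banach,real_normed_algebra_1} \<Rightarrow> 'a) \<Rightarrow> ('a \<Rightarrow> 'a) \<Rightarrow> ('a \<Rightarrow> complex) \<Rightarrow> bool" where
  "faithful_tracial_state sc st \<tau> \<longleftrightarrow>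
     (\<forall>x y. \<tau> (x + y) = \<tau> x + \<tau> y) \<and>
     (\<forall>a x. \<tau> (sc a x) = a * \<tau> x) \<and>
     \<tau> 1 = 1 \<and>
     (\<forall>x. \<tau> (st x * x) \<in> \<real> \<and> Re (\<tau> (st x * x)) \<ge> 0) \<and>
     (\<forall>x. \<tau> (st x * x) = 0 \<longrightarrow> x = 0) \<and>
     (\<forall>x y. \<tau> (x * y) = \<tau> (y * x))"

definition star_subalgebra ::
  "(complex \<Rightarrow> 'a::{banach,real_normed_algebra_1} \<Rightarrow> 'a) \<Rightarrow> ('a \<Rightarrow> 'a) \<Rightarrow> 'a set \<Rightarrow> bool" where
  "star_subalgebra sc st C \<longleftrightarrow>
     0 \<in> C \<and> (\<forall>x\<in>C. \<forall>y\<in>C. x + y \<in> C \<and> x * y \<in> C) \<and>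
     (\<forall>a. \<forall>x\<in>C. sc a x \<in> C) \<and> (\<forall>x\<in>C. st x \<in> C)"

definition cstar_gen ::
  "(complex \<Rightarrow> 'a::{banach,real_normed_algebra_1} \<Rightarrow> 'a) \<Rightarrow> ('a \<Rightarrow> 'a) \<Rightarrow> 'a set \<Rightarrow> 'a set" where
  "cstar_gen sc st S = \<Inter>{C. closed C \<and> star_subalgebra sc st C \<and> S \<subseteq> C}"

definition oprod :: "(nat \<Rightarrow> 'a::monoid_mult) \<Rightarrow> nat \<Rightarrow> 'a" where
  "oprod a k = foldr (*) (map a [0..<k]) 1"

definition free_pair :: "('a::monoid_mult \<Rightarrow> complex) \<Rightarrow> 'a set \<Rightarrow> 'a set \<Rightarrow> bool" where
  "free_pair \<tau> A1 A2 \<longleftrightarrow>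
     (\<forall>k::nat. \<forall>a::nat \<Rightarrow> 'a. \<forall>\<iota>::nat \<Rightarrow> bool.
        k \<ge> 1 \<and>
        (\<forall>i<k. a i \<in> (if \<iota> i then A1 else A2) \<and> \<tau> (a i) = 0) \<and>
        (\<forall>i. Suc i < k \<longrightarrow> \<iota> i \<noteq> \<iota> (Suc i))
        \<longrightarrow> \<tau> (oprod a k) = 0)"

end

theory Submission
  imports Defs
begin

text \<open>Give the matrix unit \<open>e i j\<close> the degree \<open>j - i\<close> modulo \<open>n\<close> and the elements of
  \<open>\<complex>p\<^sub>1 + \<dots> + \<complex>p\<^sub>m\<close> degree \<open>0\<close>, so that \<open>u\<close> is homogeneous of degree \<open>1\<close>.
  A product of homogeneous letters from the two free factors whose total degree is not
  divisible by \<open>n\<close> has trace zero: adjacent letters from the same factor can be merged, and a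
  letter with nonzero trace has degree divisible by \<open>n\<close>, so subtracting its trace splits the
  product into one with a centered letter and a shorter one; what remains are alternating
  products of centered letters, killed by freeness. The generators of \<open>B\<close> (of \<open>E\<close>) are products
  of total degree divisible by \<open>n\<close> (by \<open>l\<close>), while \<open>u\<^sup>k\<close> for \<open>0 < k < n\<close> (\<open>0 < k < l\<close>) shifts
  the degree off that lattice. Continuity of \<open>\<tau>\<close> extends the vanishing from the \<open>*\<close>-algebra
  spanned by such products to its closure, which contains \<open>B\<close> (\<open>E\<close>).\<close>

section \<open>Consequences of the C*-algebra axioms\<close>

lemma closure_closed_under:
  assumes "continuous_on UNIV f" "\<forall>x\<in>C. f x \<in> C" "x \<in> closure C"
  shows "f x \<in> closure C"
  using image_closure_subset[of C f "closure C"] assms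
  by (auto intro: continuous_on_subset closure_subset[THEN subsetD])

lemma closure_closed_under2:
  assumes "continuous_on UNIV (\<lambda>z. f (fst z) (snd z))" "\<forall>x\<in>C. \<forall>y\<in>C. f x y \<in> C"
    and "x \<in> closure C" "y \<in> closure C"
  shows "f x y \<in> closure C"
proof -
  have "(\<lambda>z. f (fst z) (snd z)) ` closure (C \<times> C) \<subseteq> closure C"
    using assms(1,2) closure_subset[of C]
    by (intro image_closure_subset) (auto intro: continuous_on_subset)
  then show ?thesis
    using assms(3,4) unfolding closure_Times by (auto simp: image_subset_iff)
qed

locale cstar_alg =
  fixes sc :: "complex \<Rightarrow> 'a::{banach,real_normed_algebra_1} \<Rightarrow> 'a" and st :: "'a \<Rightarrow> 'a"
  assumes cstar: "cstar_algebra sc st"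
begin

lemma sc_of_real: "sc (complex_of_real r) x = r *\<^sub>R x"
  and sc_add_left: "sc (a + b) x = sc a x + sc b x"
  and sc_add_right: "sc a (x + y) = sc a x + sc a y"
  and sc_sc: "sc a (sc b x) = sc (a * b) x"
  and norm_sc: "norm (sc a x) = cmod a * norm x"
  and mult_sc_left: "sc a x * y = sc a (x * y)"
  and mult_sc_right: "x * sc a y = sc a (x * y)"
  and st_add: "st (x + y) = st x + st y"
  and st_sc: "st (sc a x) = sc (cnj a) (st x)"
  and st_mult: "st (x * y) = st y * st x"
  and st_st: "st (st x) = x"
  and norm_st_mult_self: "norm (st x * x) = norm x ^ 2"
  using cstar unfolding cstar_algebra_def by metis+

lemma sc_1: "sc 1 x = x"
  using sc_of_real[of 1 x] by simp

lemma sc_zero_left: "sc 0 x = 0"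
  using sc_add_left[of 0 0 x] by simp

lemma sc_zero_right: "sc a 0 = 0"
  using sc_add_right[of a 0 0] by simp

lemma sc_sum_right: "sc a (sum f A) = (\<Sum>i\<in>A. sc a (f i))"
  by (induction A rule: infinite_finite_induct) (auto simp: sc_zero_right sc_add_right)

lemma sc_sum_left: "sc (sum f A) x = (\<Sum>i\<in>A. sc (f i) x)"
  by (induction A rule: infinite_finite_induct) (auto simp: sc_zero_left sc_add_left)

lemma sc_diff_left: "sc (a - b) x = sc a x - sc b x"
  by (metis add_diff_cancel diff_add_cancel sc_add_left)

lemma st_0: "st 0 = 0"
  using st_add[of 0 0] by simp

lemma st_1: "st 1 = 1"
  by (metis mult_1_left mult_1_right st_mult st_st)

lemma st_sum: "st (sum f A) = (\<Sum>i\<in>A. st (f i))"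
  by (induction A rule: infinite_finite_induct) (auto simp: st_0 st_add)

lemma st_scaleR: "st (r *\<^sub>R x) = r *\<^sub>R st x"
  by (metis Reals_cnj_iff Reals_of_real sc_of_real st_sc)

lemma norm_st_le: "norm (st x) \<le> norm x"
proof -
  have "norm y \<le> norm (st y)" for y
  proof (cases "y = 0")
    case False
    have "norm y ^ 2 \<le> norm (st y) * norm y"
      using norm_st_mult_self[of y] norm_mult_ineq[of "st y" y] by simp
    with False show ?thesis by (simp add: power2_eq_square)
  qed simp
  from this[of "st x"] show ?thesis by (simp add: st_st)
qed

lemma bounded_linear_st: "bounded_linear st"
  by (rule bounded_linear_intro[where K = 1]) (auto simp: st_add st_scaleR norm_st_le)

lemma bounded_linear_sc: "bounded_linear (sc a)"
  by (rule bounded_linear_intro[where K = "cmod a"])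
    (auto simp: sc_add_right norm_sc sc_sc mult.commute simp flip: sc_of_real)

lemma star_subalgebra_closure:
  assumes "star_subalgebra sc st C"
  shows "star_subalgebra sc st (closure C)"
  unfolding star_subalgebra_def
proof (intro conjI ballI allI)
  have cont_sc: "continuous_on UNIV (sc a)" for a
    using bounded_linear_sc by (rule linear_continuous_on)
  have cont_add: "continuous_on UNIV (\<lambda>z::'a \<times> 'a. fst z + snd z)"
    and cont_mult: "continuous_on UNIV (\<lambda>z::'a \<times> 'a. fst z * snd z)"
    by (intro continuous_intros)+
  show "0 \<in> closure C"
    using assms closure_subset unfolding star_subalgebra_def by blast
  fix x y a assume x: "x \<in> closure C" and y: "y \<in> closure C"
  show "x + y \<in> closure C"
    using closure_closed_under2[OF cont_add _ x y] assms unfolding star_subalgebra_def by blast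
  show "x * y \<in> closure C"
    using closure_closed_under2[OF cont_mult _ x y] assms unfolding star_subalgebra_def by blast
  show "sc a x \<in> closure C"
    using closure_closed_under[OF cont_sc _ x] assms unfolding star_subalgebra_def by blast
  show "st x \<in> closure C"
    using closure_closed_under[OF linear_continuous_on[OF bounded_linear_st] _ x] assms
    unfolding star_subalgebra_def by blast
qed

lemma cstar_gen_subset_closure:
  assumes "star_subalgebra sc st C" "S \<subseteq> C"
  shows "cstar_gen sc st S \<subseteq> closure C"
  unfolding cstar_gen_def using assms star_subalgebra_closure closure_subset
  by (intro Inter_lower) blast

end

section \<open>Words of graded letters\<close>

datatype factor = Proj | Mat

datatype 'b letter = Letter (origin: factor) (elem: 'b) (deg: int)

definition word_prod :: "'b::monoid_mult letter list \<Rightarrow> 'b" where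
  "word_prod ys = prod_list (map elem ys)"

definition word_deg :: "'b letter list \<Rightarrow> int" where
  "word_deg ys = sum_list (map deg ys)"

lemma word_prod_simps [simp]:
  "word_prod [] = 1" "word_prod (y # ys) = elem y * word_prod ys"
  "word_prod (xs @ ys) = word_prod xs * word_prod ys"
  "word_prod (replicate k y) = elem y ^ k"
  unfolding word_prod_def by simp_all

lemma word_deg_simps [simp]:
  "word_deg [] = 0" "word_deg (y # ys) = deg y + word_deg ys"
  "word_deg (xs @ ys) = word_deg xs + word_deg ys"
  "word_deg (replicate k y) = int k * deg y"
  unfolding word_deg_def by (simp_all add: sum_list_replicate)

abbreviation alternating :: "'b letter list \<Rightarrow> bool" where
  "alternating \<equiv> successively (\<lambda>a b. origin a \<noteq> origin b)"

definition merge_letters :: "'b::times letter \<Rightarrow> 'b letter \<Rightarrow> 'b letter" where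
  "merge_letters a b = Letter (origin a) (elem a * elem b) (deg a + deg b)"

lemma word_prod_merge_letters:
  "word_prod (xs @ a # b # ys) = word_prod (xs @ merge_letters a b # ys)"
  by (simp add: merge_letters_def mult.assoc)

lemma not_successively_split:
  "\<not> successively P xs \<Longrightarrow> \<exists>ys a b zs. xs = ys @ a # b # zs \<and> \<not> P a b"
proof (induction P xs rule: successively.induct)
  case (3 P x y xs)
  show ?case
  proof (cases "P x y")
    case True
    with "3.prems" obtain ys a b zs where "y # xs = ys @ a # b # zs" "\<not> P a b"
      using "3.IH" by auto
    then show ?thesis by (metis append_Cons)
  qed (use append_Nil in blast)
qed simp_all

section \<open>The free product of the projections with the matrix units\<close>

locale free_matrix_product = cstar_alg sc st
  for sc :: "complex \<Rightarrow> 'a::{banach,real_normed_algebra_1} \<Rightarrow> 'a" and st +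
  fixes \<tau> :: "'a \<Rightarrow> complex" and n m :: nat and p :: "nat \<Rightarrow> 'a" and e :: "nat \<Rightarrow> nat \<Rightarrow> 'a"
  assumes state: "faithful_tracial_state sc st \<tau>"
    and tau_cont: "continuous_on UNIV \<tau>"
    and n2: "n \<ge> 2"
    and p_proj: "\<forall>j\<in>{1..m}. st (p j) = p j \<and> p j * p j = p j"
    and p_orth: "\<forall>j\<in>{1..m}. \<forall>j'\<in>{1..m}. j \<noteq> j' \<longrightarrow> p j * p j' = 0"
    and p_sum: "(\<Sum>j=1..m. p j) = 1"
    and e_mult: "\<forall>i\<in>{1..n}. \<forall>j\<in>{1..n}. \<forall>k\<in>{1..n}. \<forall>l\<in>{1..n}.
                   e i j * e k l = (if j = k then e i l else 0)"
    and e_star: "\<forall>i\<in>{1..n}. \<forall>j\<in>{1..n}. st (e i j) = e j i"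
    and e_sum: "(\<Sum>i=1..n. e i i) = 1"
    and tau_e: "\<forall>i\<in>{1..n}. \<forall>j\<in>{1..n}. \<tau> (e i j) = (if i = j then 1 / of_nat n else 0)"
    and free: "free_pair \<tau> {(\<Sum>j=1..m. sc (c j) (p j)) | c. True}
                           {(\<Sum>i=1..n. \<Sum>j=1..n. sc (c i j) (e i j)) | c. True}"
begin

lemma tau_add: "\<tau> (x + y) = \<tau> x + \<tau> y"
  and tau_sc: "\<tau> (sc a x) = a * \<tau> x"
  and tau_1: "\<tau> 1 = 1"
  and tau_commute: "\<tau> (x * y) = \<tau> (y * x)"
  using state unfolding faithful_tracial_state_def by blast+

lemma tau_0: "\<tau> 0 = 0"
  using tau_add[of 0 0] by simp

lemma tau_sum: "\<tau> (sum f A) = (\<Sum>i\<in>A. \<tau> (f i))"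
  by (induction A rule: infinite_finite_induct) (auto simp: tau_0 tau_add)

lemma tau_diff: "\<tau> (x - y) = \<tau> x - \<tau> y"
  by (metis add_diff_cancel diff_add_cancel tau_add)

definition proj_comb :: "(nat \<Rightarrow> complex) \<Rightarrow> 'a" where
  "proj_comb c = (\<Sum>j=1..m. sc (c j) (p j))"

definition mat_comb :: "(nat \<Rightarrow> nat \<Rightarrow> complex) \<Rightarrow> 'a" where
  "mat_comb c = (\<Sum>i=1..n. \<Sum>j=1..n. sc (c i j) (e i j))"

lemma proj_comb_mult: "proj_comb c * proj_comb d = proj_comb (\<lambda>j. c j * d j)"
proof -
  have "proj_comb c * proj_comb d = (\<Sum>j=1..m. \<Sum>k=1..m. sc (c j * d k) (p j * p k))"
    unfolding proj_comb_def by (simp add: sum_product mult_sc_left mult_sc_right sc_sc mult.commute)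
  also have "\<dots> = (\<Sum>j=1..m. \<Sum>k=1..m. if k = j then sc (c j * d k) (p j) else 0)"
    using p_proj p_orth by (intro sum.cong refl) (auto simp: sc_zero_right)
  finally show ?thesis unfolding proj_comb_def by simp
qed

lemma sc_1_eq_proj_comb: "sc a 1 = proj_comb (\<lambda>_. a)"
  unfolding proj_comb_def sc_sum_right[symmetric] p_sum ..

lemma st_proj_comb: "st (proj_comb c) = proj_comb (\<lambda>j. cnj (c j))"
  unfolding proj_comb_def using p_proj by (auto simp: st_sum st_sc intro!: sum.cong)

lemma p_eq_proj_comb: "j \<in> {1..m} \<Longrightarrow> p j = proj_comb (\<lambda>j'. if j' = j then 1 else 0)"
  unfolding proj_comb_def by (simp add: if_distrib[of "\<lambda>a. sc a _"] sc_zero_left sc_1 cong: if_cong)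

lemma mat_comb_mult: "mat_comb c * mat_comb d = mat_comb (\<lambda>i l. \<Sum>j=1..n. c i j * d j l)"
proof -
  have "mat_comb c * mat_comb d =
      (\<Sum>i=1..n. \<Sum>j=1..n. \<Sum>k=1..n. \<Sum>l=1..n. sc (c i j) (e i j) * sc (d k l) (e k l))"
    unfolding mat_comb_def by (simp only: sum_distrib_right) (simp only: sum_distrib_left)
  also have "\<dots> = (\<Sum>i=1..n. \<Sum>j=1..n. \<Sum>k=1..n. \<Sum>l=1..n.
      if k = j then sc (c i j * d k l) (e i l) else 0)"
    using e_mult
    by (intro sum.cong refl) (auto simp: mult_sc_left mult_sc_right sc_sc sc_zero_right mult.commute)
  also have "\<dots> = (\<Sum>i=1..n. \<Sum>j=1..n. \<Sum>l=1..n. sc (c i j * d j l) (e i l))"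
  proof (rule sum.cong[OF refl], rule sum.cong[OF refl])
    fix i j assume "j \<in> {1..n}"
    then show "(\<Sum>k=1..n. \<Sum>l=1..n. if k = j then sc (c i j * d k l) (e i l) else 0) =
        (\<Sum>l=1..n. sc (c i j * d j l) (e i l))"
      by (subst sum.swap) (simp add: sum.delta)
  qed
  also have "\<dots> = mat_comb (\<lambda>i l. \<Sum>j=1..n. c i j * d j l)"
    unfolding mat_comb_def sc_sum_left by (intro sum.cong refl sum.swap)
  finally show ?thesis .
qed

lemma sc_1_eq_mat_comb: "sc a 1 = mat_comb (\<lambda>i j. if i = j then a else 0)"
proof -
  have "mat_comb (\<lambda>i j. if i = j then a else 0) = sc a (\<Sum>i=1..n. e i i)"
    unfolding mat_comb_def
    by (simp add: if_distrib[of "\<lambda>a. sc a _"] sc_zero_left sc_sum_right cong: if_cong)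
  then show ?thesis by (simp only: e_sum)
qed

lemma st_mat_comb: "st (mat_comb c) = mat_comb (\<lambda>i j. cnj (c j i))"
  unfolding mat_comb_def using e_star by (auto simp: st_sum st_sc intro!: sum.cong sum.swap)

lemma tau_mat_comb: "\<tau> (mat_comb c) = (\<Sum>i=1..n. c i i) / of_nat n"
proof -
  have "\<tau> (mat_comb c) = (\<Sum>i=1..n. \<Sum>j=1..n. c i j * \<tau> (e i j))"
    unfolding mat_comb_def by (simp add: tau_sum tau_sc)
  also have "\<dots> = (\<Sum>i=1..n. c i i / of_nat n)"
    using tau_e by (intro sum.cong refl) (simp add: if_distrib[of "(*) _"] sum.delta cong: if_cong)
  finally show ?thesis by (simp add: sum_divide_distrib)
qed

lemma e_eq_mat_comb:
  assumes "i \<in> {1..n}" "j \<in> {1..n}"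
  shows "e i j = mat_comb (\<lambda>a b. if a = i \<and> b = j then 1 else 0)"
proof -
  have "(\<Sum>b=1..n. sc (if a = i \<and> b = j then 1 else 0) (e a b)) = (if a = i then e i j else 0)" for a
    using assms(2)
    by (cases "a = i") (simp_all add: sc_zero_left sc_1 if_distrib[of "\<lambda>a. sc a _"] cong: if_cong)
  then show ?thesis
    unfolding mat_comb_def using assms(1) by simp
qed

definition cyclic_diag :: "int \<Rightarrow> (nat \<Rightarrow> nat \<Rightarrow> complex) \<Rightarrow> bool" where
  "cyclic_diag d c \<longleftrightarrow> (\<forall>i\<in>{1..n}. \<forall>j\<in>{1..n}. c i j \<noteq> 0 \<longrightarrow> int n dvd int j - int i - d)"

lemma cyclic_diag_mult:
  assumes "cyclic_diag d c" "cyclic_diag d' c'"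
  shows "cyclic_diag (d + d') (\<lambda>i l. \<Sum>j=1..n. c i j * c' j l)"
  unfolding cyclic_diag_def
proof (intro ballI impI)
  fix i l assume i: "i \<in> {1..n}" and l: "l \<in> {1..n}" and "(\<Sum>j=1..n. c i j * c' j l) \<noteq> 0"
  then obtain j where j: "j \<in> {1..n}" and "c i j * c' j l \<noteq> 0"
    using sum.not_neutral_contains_not_neutral by blast
  then have "int n dvd (int j - int i - d) + (int l - int j - d')"
    using assms i l unfolding cyclic_diag_def by (intro dvd_add) auto
  then show "int n dvd int l - int i - (d + d')"
    by (simp add: algebra_simps)
qed

primrec graded :: "factor \<Rightarrow> int \<Rightarrow> 'a set" where
  "graded Proj d = {proj_comb c | c. d = 0}"
| "graded Mat d = {mat_comb c | c. cyclic_diag d c}"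

lemma graded_mult:
  assumes "x \<in> graded f d" "y \<in> graded f d'"
  shows "x * y \<in> graded f (d + d')"
proof (cases f)
  case Proj
  with assms show ?thesis by (auto simp: proj_comb_mult)
next
  case Mat
  with assms obtain c c' where c: "cyclic_diag d c" "cyclic_diag d' c'" "x = mat_comb c" "y = mat_comb c'"
    by auto
  then have "x * y = mat_comb (\<lambda>i l. \<Sum>j=1..n. c i j * c' j l)"
    by (simp only: mat_comb_mult)
  with cyclic_diag_mult[OF c(1,2)] Mat show ?thesis by (simp only: graded.simps) blast
qed

lemma cyclic_diag_transpose:
  assumes "cyclic_diag d c"
  shows "cyclic_diag (- d) (\<lambda>i j. cnj (c j i))"
  unfolding cyclic_diag_def
proof (intro ballI impI)
  fix i j assume "i \<in> {1..n}" "j \<in> {1..n}" "cnj (c j i) \<noteq> 0"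
  with assms have "int n dvd - (int i - int j - d)"
    unfolding cyclic_diag_def dvd_minus_iff by auto
  then show "int n dvd int j - int i - - d"
    by (simp add: algebra_simps)
qed

lemma st_graded: "x \<in> graded f d \<Longrightarrow> st x \<in> graded f (- d)"
  by (cases f) (auto simp: st_proj_comb st_mat_comb intro: cyclic_diag_transpose)

lemma tau_graded_eq_0:
  assumes "x \<in> graded f d" "\<not> int n dvd d"
  shows "\<tau> x = 0"
proof (cases f)
  case Mat
  with assms(1) obtain c where "cyclic_diag d c" "x = mat_comb c" by auto
  moreover from this(1) assms(2) have "c i i = 0" if "i \<in> {1..n}" for i
    using that unfolding cyclic_diag_def by force
  ultimately show ?thesis by (simp add: tau_mat_comb)
qed (use assms in auto)

lemma graded_minus_trace:
  assumes "x \<in> graded f d" "int n dvd d"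
  shows "x - sc (\<tau> x) 1 \<in> graded f d"
proof (cases f)
  case Proj
  with assms(1) obtain c where c: "d = 0" "x = proj_comb c" by auto
  have "x - sc (\<tau> x) 1 = proj_comb (\<lambda>j. c j - \<tau> x)"
    unfolding c(2) sc_1_eq_proj_comb proj_comb_def by (simp add: sc_diff_left sum_subtractf)
  with c(1) Proj show ?thesis by auto
next
  case Mat
  with assms(1) obtain c where c: "cyclic_diag d c" "x = mat_comb c" by auto
  have "cyclic_diag d (\<lambda>i j. c i j - (if i = j then \<tau> x else 0))"
    using c(1) assms(2) unfolding cyclic_diag_def by (auto simp: dvd_minus_iff)
  moreover have "x - sc (\<tau> x) 1 = mat_comb (\<lambda>i j. c i j - (if i = j then \<tau> x else 0))"
    unfolding c(2) sc_1_eq_mat_comb mat_comb_def by (simp add: sc_diff_left sum_subtractf)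
  ultimately show ?thesis using Mat by auto
qed

lemma graded_in_free_factor:
  assumes "x \<in> graded f d"
  shows "x \<in> (if f = Proj then {\<Sum>j=1..m. sc (c j) (p j) | c. True}
      else {\<Sum>i=1..n. \<Sum>j=1..n. sc (c i j) (e i j) | c. True})"
proof (cases f)
  case Proj
  with assms obtain c where "x = proj_comb c" by auto
  with Proj show ?thesis unfolding proj_comb_def by simp (rule exI[of _ c], simp)
next
  case Mat
  with assms obtain c where "x = mat_comb c" by auto
  with Mat show ?thesis unfolding mat_comb_def by simp (rule exI[of _ c], simp)
qed

definition homogeneous :: "'a letter \<Rightarrow> bool" where
  "homogeneous y \<longleftrightarrow> elem y \<in> graded (origin y) (deg y)"

lemma homogeneous_merge_letters:
  "homogeneous a \<Longrightarrow> homogeneous b \<Longrightarrow> origin a = origin b \<Longrightarrow> homogeneous (merge_letters a b)"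
  unfolding homogeneous_def merge_letters_def by (simp add: graded_mult)

definition center_letter :: "'a letter \<Rightarrow> 'a letter" where
  "center_letter y = Letter (origin y) (elem y - sc (\<tau> (elem y)) 1) (deg y)"

lemma homogeneous_center_letter:
  "homogeneous y \<Longrightarrow> int n dvd deg y \<Longrightarrow> homogeneous (center_letter y)"
  unfolding homogeneous_def center_letter_def by (simp add: graded_minus_trace)

lemma tau_center_letter: "\<tau> (elem (center_letter y)) = 0"
  unfolding center_letter_def by (simp add: tau_diff tau_sc tau_1)

lemma word_prod_center_letter:
  "word_prod (xs @ y # ys) =
     word_prod (xs @ center_letter y # ys) + sc (\<tau> (elem y)) (word_prod (xs @ ys))"
  unfolding center_letter_def
  by (simp add: algebra_simps mult_sc_left mult_sc_right)

lemma tau_alternating_centered_word: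
  assumes "alternating ys" "ys \<noteq> []" "\<forall>y\<in>set ys. homogeneous y \<and> \<tau> (elem y) = 0"
  shows "\<tau> (word_prod ys) = 0"
proof -
  define a where "a i = elem (ys ! i)" for i
  define \<iota> where "\<iota> i = (origin (ys ! i) = Proj)" for i
  have "\<tau> (oprod a (length ys)) = 0"
  proof (rule free[unfolded free_pair_def, rule_format, of "length ys" a \<iota>], intro conjI allI impI)
    show "1 \<le> length ys" using assms(2) by (simp add: Suc_le_eq)
  next
    fix i assume "i < length ys"
    then have "ys ! i \<in> set ys" by simp
    with assms(3) graded_in_free_factor
    show "a i \<in> (if \<iota> i then {\<Sum>j=1..m. sc (c j) (p j) | c. True}
        else {\<Sum>i=1..n. \<Sum>j=1..n. sc (c i j) (e i j) | c. True})" "\<tau> (a i) = 0"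
      unfolding a_def \<iota>_def homogeneous_def by blast+
  next
    fix i assume "Suc i < length ys"
    with assms(1) show "\<iota> i \<noteq> \<iota> (Suc i)"
      unfolding \<iota>_def by (cases "origin (ys ! i)"; cases "origin (ys ! Suc i)")
        (auto dest: successively_nth)
  qed
  moreover have "map a [0..<length ys] = map elem ys"
    unfolding a_def by (rule nth_equalityI) auto
  then have "oprod a (length ys) = word_prod ys"
    unfolding oprod_def word_prod_def by (simp add: prod_list.eq_foldr)
  ultimately show ?thesis by simp
qed

lemma tau_homogeneous_word:
  assumes "\<forall>y\<in>set ys. homogeneous y" "\<not> int n dvd word_deg ys"
  shows "\<tau> (word_prod ys) = 0"
  using assms
  \<comment> \<open>Merging two letters shortens the word but may create one uncentered letter; centering
    keeps the length and removes one. Both decrease the measure.\<close>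
proof (induction "2 * length ys + length (filter (\<lambda>y. \<tau> (elem y) \<noteq> 0) ys)"
    arbitrary: ys rule: less_induct)
  case less
  consider (adjacent) xs a b zs where "ys = xs @ a # b # zs" "origin a = origin b"
    | (centered) "alternating ys" "\<forall>y\<in>set ys. \<tau> (elem y) = 0"
    | (uncentered) xs y zs where "ys = xs @ y # zs" "\<tau> (elem y) \<noteq> 0"
  proof (cases "alternating ys")
    case False
    then obtain xs a b zs where "ys = xs @ a # b # zs" "origin a = origin b"
      using not_successively_split by blast
    then show thesis by (rule that(1))
  next
    case alt: True
    show thesis
    proof (cases "\<forall>y\<in>set ys. \<tau> (elem y) = 0")
      case True
      with alt show thesis by (rule that(2))
    next
      case False
      then obtain y where "y \<in> set ys" "\<tau> (elem y) \<noteq> 0" by blast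
      with split_list[of y ys] show thesis using that(3) by blast
    qed
  qed
  then show ?case
  proof cases
    case adjacent
    have "\<tau> (word_prod (xs @ merge_letters a b # zs)) = 0"
    proof (rule less.hyps)
      show "\<forall>y\<in>set (xs @ merge_letters a b # zs). homogeneous y"
        using less.prems(1) adjacent by (auto intro: homogeneous_merge_letters)
      show "\<not> int n dvd word_deg (xs @ merge_letters a b # zs)"
        using less.prems(2) adjacent(1) by (simp add: merge_letters_def add.assoc)
    qed (use adjacent(1) in simp)
    then show ?thesis unfolding adjacent(1) by (subst word_prod_merge_letters)
  next
    case centered
    moreover have "ys \<noteq> []" using less.prems(2) by auto
    ultimately show ?thesis using less.prems(1) by (simp add: tau_alternating_centered_word)
  next
    case uncentered
    then have "int n dvd deg y"
      using less.prems(1) tau_graded_eq_0 unfolding homogeneous_def by auto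
    have "\<tau> (word_prod (xs @ center_letter y # zs)) = 0"
    proof (rule less.hyps)
      show "\<forall>y\<in>set (xs @ center_letter y # zs). homogeneous y"
        using less.prems(1) uncentered(1) \<open>int n dvd deg y\<close>
        by (auto intro: homogeneous_center_letter)
      show "\<not> int n dvd word_deg (xs @ center_letter y # zs)"
        using less.prems(2) uncentered(1) by (simp add: center_letter_def)
    qed (use uncentered in \<open>simp add: tau_center_letter\<close>)
    moreover have "\<tau> (word_prod (xs @ zs)) = 0"
    proof (rule less.hyps)
      show "\<not> int n dvd word_deg (xs @ zs)"
        using less.prems(2) uncentered(1) \<open>int n dvd deg y\<close>
        by (simp add: add.left_commute[of "word_deg xs"] dvd_add_right_iff)
    qed (use less.prems(1) uncentered(1) in auto)
    ultimately show ?thesis unfolding uncentered(1)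
      by (subst word_prod_center_letter) (simp only: tau_add tau_sc mult_zero_right add_0)
  qed
qed

inductive_set span_deg_dvd :: "int \<Rightarrow> 'a set" for q :: int where
  word: "\<forall>y\<in>set ys. homogeneous y \<Longrightarrow> q dvd word_deg ys \<Longrightarrow> word_prod ys \<in> span_deg_dvd q"
| add: "x \<in> span_deg_dvd q \<Longrightarrow> y \<in> span_deg_dvd q \<Longrightarrow> x + y \<in> span_deg_dvd q"
| scale: "x \<in> span_deg_dvd q \<Longrightarrow> sc a x \<in> span_deg_dvd q"

lemma zero_in_span_deg_dvd: "0 \<in> span_deg_dvd q"
proof -
  have "sc 0 (word_prod []) \<in> span_deg_dvd q"
    by (intro span_deg_dvd.scale span_deg_dvd.word) auto
  then show ?thesis by (simp add: sc_zero_left)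
qed

lemma span_deg_dvd_mult:
  assumes "x \<in> span_deg_dvd q" "y \<in> span_deg_dvd q"
  shows "x * y \<in> span_deg_dvd q"
  using assms
proof (induction x rule: span_deg_dvd.induct)
  case (word ys)
  from word.prems show ?case
  proof (induction y rule: span_deg_dvd.induct)
    case (word zs)
    then show ?case
      using span_deg_dvd.word[of "ys @ zs" q] \<open>\<forall>y\<in>set ys. homogeneous y\<close> \<open>q dvd word_deg ys\<close>
      by auto
  qed (simp_all add: distrib_left mult_sc_right span_deg_dvd.add span_deg_dvd.scale)
qed (simp_all add: distrib_right mult_sc_left span_deg_dvd.add span_deg_dvd.scale)

definition star_letter :: "'a letter \<Rightarrow> 'a letter" where
  "star_letter y = Letter (origin y) (st (elem y)) (- deg y)"

lemma st_word_prod: "st (word_prod ys) = word_prod (rev (map star_letter ys))"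
  by (induction ys) (simp_all add: st_1 st_mult star_letter_def)

lemma word_deg_star: "word_deg (rev (map star_letter ys)) = - word_deg ys"
  by (induction ys) (simp_all add: star_letter_def)

lemma span_deg_dvd_st: "x \<in> span_deg_dvd q \<Longrightarrow> st x \<in> span_deg_dvd q"
proof (induction x rule: span_deg_dvd.induct)
  case (word ys)
  then show ?case
    unfolding st_word_prod
    by (intro span_deg_dvd.word) (auto simp: word_deg_star homogeneous_def star_letter_def st_graded)
qed (simp_all add: st_add st_sc span_deg_dvd.add span_deg_dvd.scale)

lemma star_subalgebra_span_deg_dvd: "star_subalgebra sc st (span_deg_dvd q)"
  unfolding star_subalgebra_def
  by (auto intro: zero_in_span_deg_dvd span_deg_dvd.add span_deg_dvd_mult span_deg_dvd.scale
      span_deg_dvd_st)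

definition shift :: 'a where
  "shift = (\<Sum>i=1..n-1. e i (i + 1)) + e n 1"

lemma shift_graded: "shift \<in> graded Mat 1"
proof -
  define next_idx where "next_idx i = (if i < n then i + 1 else 1)" for i
  define c where "c i j = (if j = next_idx i then 1 else 0 :: complex)" for i j
  have next_idx: "next_idx i \<in> {1..n}" for i
    using n2 unfolding next_idx_def by auto
  have "mat_comb c = (\<Sum>i=1..n. e i (next_idx i))"
    unfolding mat_comb_def c_def using next_idx
    by (simp add: if_distrib[of "\<lambda>a. sc a _"] sc_zero_left sc_1 cong: if_cong)
  also have "\<dots> = (\<Sum>i=1..n-1. e i (next_idx i)) + e n (next_idx n)"
    using n2 sum.cl_ivl_Suc[of "\<lambda>i. e i (next_idx i)" 1 "n - 1"] by simp
  also have "\<dots> = shift"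
    unfolding shift_def next_idx_def by (auto intro!: sum.cong)
  finally have "shift = mat_comb c" ..
  moreover have "cyclic_diag 1 c"
    unfolding cyclic_diag_def c_def next_idx_def
    by (auto split: if_splits)
  ultimately show ?thesis by auto
qed

abbreviation shift_letter :: "'a letter" where
  "shift_letter \<equiv> Letter Mat shift 1"

lemma homogeneous_shift_letter: "homogeneous shift_letter"
  unfolding homogeneous_def using shift_graded by simp

lemma tau_span_deg_dvd_mult_shift_pow:
  assumes "q dvd int n" "0 < k" "int k < q" "x \<in> span_deg_dvd q"
  shows "\<tau> (x * shift ^ k) = 0"
  using assms(4)
proof (induction x rule: span_deg_dvd.induct)
  case (word ys)
  have "\<not> int n dvd word_deg (ys @ replicate k shift_letter)"
  proof
    assume "int n dvd word_deg (ys @ replicate k shift_letter)"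
    with assms(1) have "q dvd word_deg ys + int k" by (simp add: dvd_trans)
    with word.hyps(2) have "q dvd int k" by (simp add: dvd_add_right_iff)
    with assms(2,3) show False using zdvd_imp_le by fastforce
  qed
  moreover have "\<forall>y\<in>set (ys @ replicate k shift_letter). homogeneous y"
    using word.hyps(1) homogeneous_shift_letter by auto
  ultimately have "\<tau> (word_prod (ys @ replicate k shift_letter)) = 0"
    by (intro tau_homogeneous_word)
  then show ?case by simp
qed (simp_all add: distrib_right mult_sc_left tau_add tau_sc)

lemma tau_cstar_gen_mult_shift_pow:
  assumes "q dvd int n" "0 < k" "int k < q" "S \<subseteq> span_deg_dvd q" "x \<in> cstar_gen sc st S"
  shows "\<tau> (x * shift ^ k) = 0 \<and> \<tau> (shift ^ k * x) = 0"
proof -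
  have "continuous_on UNIV (\<lambda>x. \<tau> (x * shift ^ k))"
    by (intro continuous_on_compose2[OF tau_cont] continuous_intros) auto
  then have "closed {x. \<tau> (x * shift ^ k) = 0}"
    by (simp add: closed_Collect_eq)
  moreover have "span_deg_dvd q \<subseteq> {x. \<tau> (x * shift ^ k) = 0}"
    using tau_span_deg_dvd_mult_shift_pow[OF assms(1-3)] by blast
  ultimately have "closure (span_deg_dvd q) \<subseteq> {x. \<tau> (x * shift ^ k) = 0}"
    by (rule closure_minimal[rotated])
  moreover have "x \<in> closure (span_deg_dvd q)"
    using cstar_gen_subset_closure[OF star_subalgebra_span_deg_dvd assms(4)] assms(5) by blast
  ultimately show ?thesis using tau_commute[of x "shift ^ k"] by auto
qed

lemma conj_p_in_span_deg_dvd: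
  assumes "j \<in> {1..m}"
  shows "shift ^ k * p j * st shift ^ k \<in> span_deg_dvd q"
proof -
  let ?ys = "replicate k shift_letter @ [Letter Proj (p j) 0] @ replicate k (star_letter shift_letter)"
  have "p j \<in> graded Proj 0" using p_eq_proj_comb[OF assms] by auto
  then have "word_prod ?ys \<in> span_deg_dvd q"
    using homogeneous_shift_letter st_graded[OF shift_graded]
    by (intro span_deg_dvd.word) (auto simp: homogeneous_def star_letter_def)
  then show ?thesis by (simp add: star_letter_def mult.assoc)
qed

lemma e_diag_in_span_deg_dvd:
  assumes "i \<in> {1..n}"
  shows "e i i \<in> span_deg_dvd q"
proof -
  have "cyclic_diag 0 (\<lambda>a b. if a = i \<and> b = i then 1 else 0)"
    unfolding cyclic_diag_def by auto
  then have "e i i \<in> graded Mat 0"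
    using e_eq_mat_comb[OF assms assms] by auto
  then have "word_prod [Letter Mat (e i i) 0] \<in> span_deg_dvd q"
    by (intro span_deg_dvd.word) (auto simp: homogeneous_def)
  then show ?thesis by simp
qed

lemma shift_pow_in_span_deg_dvd: "shift ^ (l * t) \<in> span_deg_dvd (int l)"
  using span_deg_dvd.word[of "replicate (l * t) shift_letter" "int l"] homogeneous_shift_letter
  by simp

end

theorem corollary3p2:
  fixes sc :: "complex \<Rightarrow> 'a::{banach,real_normed_algebra_1} \<Rightarrow> 'a"
    and st :: "'a \<Rightarrow> 'a" and \<tau> :: "'a \<Rightarrow> complex"
    and n m :: nat and \<alpha> :: "nat \<Rightarrow> real"
    and p :: "nat \<Rightarrow> 'a" and e :: "nat \<Rightarrow> nat \<Rightarrow> 'a"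
  assumes cstar: "cstar_algebra sc st"
    and state: "faithful_tracial_state sc st \<tau>"
    and tau_cont: "continuous_on UNIV \<tau>"
    and n2: "n \<ge> 2" and m1: "m \<ge> 1"
    and alpha_pos: "\<forall>j\<in>{1..m}. 0 < \<alpha> j"
    and alpha_mono: "\<forall>j\<in>{1..m}. \<forall>j'\<in>{1..m}. j \<le> j' \<longrightarrow> \<alpha> j \<le> \<alpha> j'"
    and alpha_sum: "(\<Sum>j=1..m. \<alpha> j) = 1"
    and p_proj: "\<forall>j\<in>{1..m}. st (p j) = p j \<and> p j * p j = p j"
    and p_orth: "\<forall>j\<in>{1..m}. \<forall>j'\<in>{1..m}. j \<noteq> j' \<longrightarrow> p j * p j' = 0"
    and p_sum: "(\<Sum>j=1..m. p j) = 1"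
    and tau_p: "\<forall>j\<in>{1..m}. \<tau> (p j) = complex_of_real (\<alpha> j)"
    and e_mult: "\<forall>i\<in>{1..n}. \<forall>j\<in>{1..n}. \<forall>k\<in>{1..n}. \<forall>l\<in>{1..n}.
                   e i j * e k l = (if j = k then e i l else 0)"
    and e_star: "\<forall>i\<in>{1..n}. \<forall>j\<in>{1..n}. st (e i j) = e j i"
    and e_sum: "(\<Sum>i=1..n. e i i) = 1"
    and tau_e: "\<forall>i\<in>{1..n}. \<forall>j\<in>{1..n}. \<tau> (e i j) = (if i = j then 1 / of_nat n else 0)"
    and free: "free_pair \<tau> {(\<Sum>j=1..m. sc (c j) (p j)) | c. True}
                           {(\<Sum>i=1..n. \<Sum>j=1..n. sc (c i j) (e i j)) | c. True}"
    and generated: "cstar_gen sc st ({p j | j. j \<in> {1..m}} \<union> {e i j | i j. i \<in> {1..n} \<and> j \<in> {1..n}}) = UNIV"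
  defines "u \<equiv> (\<Sum>i=1..n-1. e i (i + 1)) + e n 1"
  defines "B \<equiv> cstar_gen sc st
             ({u ^ k * p j * st u ^ k | k j. k \<le> n - 1 \<and> j \<in> {1..m}} \<union> {e i i | i. i \<in> {1..n}})"
  shows "(\<forall>b\<in>B. \<forall>k. 0 < k \<and> k \<le> n - 1 \<longrightarrow> \<tau> (b * u ^ k) = 0 \<and> \<tau> (u ^ k * b) = 0) \<and>
         (\<forall>l::nat. l dvd n \<and> 1 < l \<and> l < n \<longrightarrow>
            (let E = cstar_gen sc st
                ({u ^ k * p j * st u ^ k | k j. k \<le> l - 1 \<and> j \<in> {1..m}} \<union> {e i i | i. i \<in> {1..n}}
                 \<union> {u ^ (l * t) | t. 1 \<le> t \<and> t \<le> n div l - 1})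
             in \<forall>x\<in>E. \<forall>k. 0 < k \<and> k \<le> l - 1 \<longrightarrow> \<tau> (x * u ^ k) = 0 \<and> \<tau> (u ^ k * x) = 0))"
proof -
  interpret free_matrix_product sc st \<tau> n m p e
    using cstar state tau_cont n2 p_proj p_orth p_sum e_mult e_star e_sum tau_e free
    by (simp add: free_matrix_product_def free_matrix_product_axioms_def cstar_alg_def)
  have u: "u = shift" unfolding u_def shift_def ..
  have B_gens: "{u ^ k * p j * st u ^ k | k j. k \<le> n - 1 \<and> j \<in> {1..m}} \<union> {e i i | i. i \<in> {1..n}}
      \<subseteq> span_deg_dvd (int n)"
    unfolding u using conj_p_in_span_deg_dvd e_diag_in_span_deg_dvd by blast
  have E_gens: "{u ^ k * p j * st u ^ k | k j. k \<le> l - 1 \<and> j \<in> {1..m}} \<union> {e i i | i. i \<in> {1..n}}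
      \<union> {u ^ (l * t) | t. 1 \<le> t \<and> t \<le> n div l - 1} \<subseteq> span_deg_dvd (int l)" for l
    unfolding u using conj_p_in_span_deg_dvd e_diag_in_span_deg_dvd shift_pow_in_span_deg_dvd by blast
  show ?thesis
    unfolding Let_def B_def u
    using tau_cstar_gen_mult_shift_pow[OF _ _ _ B_gens[unfolded u]] n2
      tau_cstar_gen_mult_shift_pow[OF _ _ _ E_gens[unfolded u]]
    by (auto simp: of_nat_less_iff)
qed

end
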